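(* Let $\Delta>1$, let $\varepsilon=1/100$ and $\hat p=\Delta^{-3/4-5\varepsilon}$, and let $\delta,\nu\ge 0$. Let $G$ be a graph, $v$ a vertex of $G$, $L$ a finite set, and $p:V(G)\times L\to[0,\infty)$ a function such that for every $\gamma\in L$ either $p(v,\gamma)=0$ or $p(v,\gamma)\ge 1/\Delta$. Define $p_a(v,\gamma)=p(v,\gamma)$ if $p(v,\gamma)\le\hat p$ and $p_a(v,\gamma)=0$ otherwise, and $p_c(v,\gamma)=p_a(v,\gamma)$ if $\sum_{u\sim v}p(u,\gamma)\le 100\ln\Delta$ and $p_c(v,\gamma)=0$ otherwise. Suppose $$h(v,p):=-\sum_{\gamma\in L:\,p(v,\gamma)>0}p(v,\gamma)\ln p(v,\gamma)\ \ge\ (1-\delta)\ln\Delta\quad\text{and}\quad \sum_{\gamma\in L}p(v,\gamma)\in[1-\nu,1+\nu].$$ Then $\sum_{\gamma}p_a(v,\gamma)\ge 1-6(\delta+\nu)$. If in addition $\xi(v,p):=\sum_{u\sim v}\sum_{\gamma\in L}p(u,\gamma)p(v,\gamma)\le 2K$ for some $0<K\le\ln\Delta$, then $\sum_\gamma p_c(v,\gamma)\ge 1-6(\delta+\nu)-2\varepsilon$.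
   Context: $u\sim v$ means $u$ is adjacent to $v$ in $G$; $\ln$ is the natural logarithm. *)

theory Defs
  imports Complex_Main
begin

definition simple_graph :: "'a set \<Rightarrow> ('a \<Rightarrow> 'a \<Rightarrow> bool) \<Rightarrow> bool" where
  "simple_graph V E \<longleftrightarrow> finite V \<and> (\<forall>u w. E u w \<longrightarrow> u \<in> V \<and> w \<in> V)
      \<and> (\<forall>u w. E u w \<longrightarrow> E w u) \<and> (\<forall>u. \<not> E u u)"

definition nbrs :: "'a set \<Rightarrow> ('a \<Rightarrow> 'a \<Rightarrow> bool) \<Rightarrow> 'a \<Rightarrow> 'a set" where
  "nbrs V E v = {u \<in> V. E u v}"

definition eps :: real where "eps = 1/100"

definition phat :: "real \<Rightarrow> real" where
  "phat \<Delta> = \<Delta> powr (-3/4 - 5 * eps)"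

definition p_a :: "real \<Rightarrow> ('a \<Rightarrow> 'c \<Rightarrow> real) \<Rightarrow> 'a \<Rightarrow> 'c \<Rightarrow> real" where
  "p_a \<Delta> p v \<gamma> = (if p v \<gamma> \<le> phat \<Delta> then p v \<gamma> else 0)"

definition p_c :: "'a set \<Rightarrow> ('a \<Rightarrow> 'a \<Rightarrow> bool) \<Rightarrow> real \<Rightarrow> ('a \<Rightarrow> 'c \<Rightarrow> real) \<Rightarrow> 'a \<Rightarrow> 'c \<Rightarrow> real" where
  "p_c V E \<Delta> p v \<gamma> =
     (if (\<Sum>u\<in>nbrs V E v. p u \<gamma>) \<le> 100 * ln \<Delta> then p_a \<Delta> p v \<gamma> else 0)"

definition entropy_h :: "'c set \<Rightarrow> ('a \<Rightarrow> 'c \<Rightarrow> real) \<Rightarrow> 'a \<Rightarrow> real" where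
  "entropy_h L p v = - (\<Sum>\<gamma>\<in>{\<gamma>\<in>L. p v \<gamma> > 0}. p v \<gamma> * ln (p v \<gamma>))"

definition xi :: "'a set \<Rightarrow> ('a \<Rightarrow> 'a \<Rightarrow> bool) \<Rightarrow> 'c set \<Rightarrow> ('a \<Rightarrow> 'c \<Rightarrow> real) \<Rightarrow> 'a \<Rightarrow> real" where
  "xi V E L p v = (\<Sum>u\<in>nbrs V E v. \<Sum>\<gamma>\<in>L. p u \<gamma> * p v \<gamma>)"

end

theory Submission
  imports Defs
begin

text \<open>Since \<open>p(v,\<gamma>) \<ge> 1/\<Delta>\<close> on the support, every colour contributes at most
  \<open>p(v,\<gamma>) ln \<Delta>\<close> to the entropy, and a colour above the threshold \<open>phat \<Delta> = \<Delta> powr (-4/5)\<close>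
  at most \<open>(4/5) p(v,\<gamma>) ln \<Delta>\<close>. So high entropy forces all but \<open>5\<delta> + 4\<nu>\<close> of the mass into
  \<open>p\<^sub>a\<close>; only the upper bound on the total mass is needed. Discarding further the colours whose
  neighbourhood weight exceeds \<open>100 ln \<Delta>\<close> costs, by Markov's inequality, at most
  \<open>\<xi>(v,p) / (100 ln \<Delta>) \<le> 2K / (100 ln \<Delta>) \<le> 2 eps\<close>.\<close>

lemma neg_mult_ln_le_of_inverse_le:
  fixes x \<Delta> :: real
  assumes "0 < \<Delta>" and "1 / \<Delta> \<le> x"
  shows "- (x * ln x) \<le> x * ln \<Delta>"
proof -
  have "0 < 1 / \<Delta>" using assms(1) by simp
  hence "0 < x" using assms(2) by linarith
  have "ln (1 / \<Delta>) \<le> ln x" using assms \<open>0 < x\<close> by simp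
  hence "- ln \<Delta> \<le> ln x" using assms(1) by (simp add: ln_div)
  hence "x * (- ln \<Delta>) \<le> x * ln x" using \<open>0 < x\<close> by (intro mult_left_mono) auto
  thus ?thesis by simp
qed

lemma neg_mult_ln_le_of_threshold_less:
  fixes x t :: real
  assumes "0 < t" and "t < x"
  shows "- (x * ln x) \<le> x * - ln t"
proof -
  have "ln t < ln x" using assms by simp
  hence "x * ln t \<le> x * ln x" using assms by (intro mult_left_mono) auto
  thus ?thesis by simp
qed

lemma ln_phat: "0 < \<Delta> \<Longrightarrow> ln (phat \<Delta>) = - (4/5) * ln \<Delta>"
  unfolding phat_def eps_def by (simp add: ln_powr)

lemma p_a_le: "0 \<le> p v \<gamma> \<Longrightarrow> p_a \<Delta> p v \<gamma> \<le> p v \<gamma>"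
  unfolding p_a_def by simp

lemma entropy_h_le_p_a:
  fixes p :: "'a \<Rightarrow> 'c \<Rightarrow> real"
  assumes "0 < \<Delta>" and "finite L"
    and nonneg: "\<forall>\<gamma>\<in>L. p v \<gamma> \<ge> 0"
    and gap: "\<forall>\<gamma>\<in>L. p v \<gamma> = 0 \<or> p v \<gamma> \<ge> 1 / \<Delta>"
  shows "entropy_h L p v
    \<le> ln \<Delta> * (\<Sum>\<gamma>\<in>L. p_a \<Delta> p v \<gamma>) + (4/5) * ln \<Delta> * (\<Sum>\<gamma>\<in>L. p v \<gamma> - p_a \<Delta> p v \<gamma>)"
    (is "_ \<le> ?rhs")
proof -
  define f where
    "f \<gamma> = ln \<Delta> * p_a \<Delta> p v \<gamma> + (4/5) * ln \<Delta> * (p v \<gamma> - p_a \<Delta> p v \<gamma>)" for \<gamma>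
  have term_le: "- (p v \<gamma> * ln (p v \<gamma>)) \<le> f \<gamma>" if "\<gamma> \<in> L" "0 < p v \<gamma>" for \<gamma>
  proof (cases "p v \<gamma> \<le> phat \<Delta>")
    case True
    have "1 / \<Delta> \<le> p v \<gamma>" using gap that by auto
    with True neg_mult_ln_le_of_inverse_le[OF assms(1) this] show ?thesis
      unfolding f_def p_a_def by (simp add: mult.commute)
  next
    case False
    have "0 < phat \<Delta>" unfolding phat_def using assms(1) by simp
    with False neg_mult_ln_le_of_threshold_less[of "phat \<Delta>" "p v \<gamma>"] show ?thesis
      unfolding f_def p_a_def ln_phat[OF assms(1)] by (simp add: mult_ac)
  qed
  have f_zero: "f \<gamma> = 0" if "\<gamma> \<in> L" "\<not> 0 < p v \<gamma>" for \<gamma>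
    using that nonneg unfolding f_def p_a_def by force
  have "entropy_h L p v \<le> (\<Sum>\<gamma>\<in>{\<gamma>\<in>L. 0 < p v \<gamma>}. f \<gamma>)"
    unfolding entropy_h_def sum_negf[symmetric] by (rule sum_mono) (use term_le in auto)
  also have "\<dots> = (\<Sum>\<gamma>\<in>L. f \<gamma>)"
    by (rule sum.mono_neutral_left) (use assms(2) f_zero in auto)
  also have "\<dots> = ?rhs"
    unfolding f_def by (simp add: sum.distrib sum_distrib_left)
  finally show ?thesis .
qed

lemma sum_p_a_ge:
  fixes p :: "'a \<Rightarrow> 'c \<Rightarrow> real"
  assumes "1 < \<Delta>" and "finite L"
    and "\<forall>\<gamma>\<in>L. p v \<gamma> \<ge> 0"
    and "\<forall>\<gamma>\<in>L. p v \<gamma> = 0 \<or> p v \<gamma> \<ge> 1 / \<Delta>"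
    and entropy: "entropy_h L p v \<ge> (1 - \<delta>) * ln \<Delta>"
    and mass: "(\<Sum>\<gamma>\<in>L. p v \<gamma>) \<le> 1 + \<nu>"
  shows "(\<Sum>\<gamma>\<in>L. p_a \<Delta> p v \<gamma>) \<ge> 1 - 5 * \<delta> - 4 * \<nu>"
proof -
  let ?A = "\<Sum>\<gamma>\<in>L. p_a \<Delta> p v \<gamma>" and ?S = "\<Sum>\<gamma>\<in>L. p v \<gamma>"
  have "ln \<Delta> * (1 - \<delta>) \<le> ln \<Delta> * ?A + (4/5) * ln \<Delta> * (?S - ?A)"
    using entropy entropy_h_le_p_a[of \<Delta> L p v] assms(1-4) by (simp add: sum_subtractf mult.commute)
  also have "\<dots> = ln \<Delta> * (?A + (4/5) * (?S - ?A))"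
    by (simp add: field_simps)
  finally have "1 - \<delta> \<le> ?A + (4/5) * (?S - ?A)"
    using assms(1) by (simp add: mult_le_cancel_left_pos)
  thus ?thesis using mass by (simp add: field_simps)
qed

lemma sum_p_a_minus_p_c_le_xi:
  fixes p :: "'a \<Rightarrow> 'c \<Rightarrow> real"
  assumes "1 < \<Delta>" and "v \<in> V"
    and nonneg: "\<forall>u\<in>V. \<forall>\<gamma>\<in>L. p u \<gamma> \<ge> 0"
  shows "(\<Sum>\<gamma>\<in>L. p_a \<Delta> p v \<gamma> - p_c V E \<Delta> p v \<gamma>) \<le> xi V E L p v / (100 * ln \<Delta>)"
proof -
  define N where "N \<gamma> = (\<Sum>u\<in>nbrs V E v. p u \<gamma>)" for \<gamma>
  have ln_pos: "0 < ln \<Delta>" using assms(1) by simp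
  have cut_le: "p_a \<Delta> p v \<gamma> - p_c V E \<Delta> p v \<gamma> \<le> p v \<gamma> * N \<gamma> / (100 * ln \<Delta>)"
    if "\<gamma> \<in> L" for \<gamma>
  proof -
    have pv: "0 \<le> p v \<gamma>" using nonneg assms(2) that by blast
    have "0 \<le> N \<gamma>" unfolding N_def nbrs_def using nonneg that by (intro sum_nonneg) auto
    show ?thesis
    proof (cases "N \<gamma> \<le> 100 * ln \<Delta>")
      case True
      with pv \<open>0 \<le> N \<gamma>\<close> ln_pos show ?thesis unfolding p_c_def N_def by simp
    next
      case False
      have "p v \<gamma> \<le> p v \<gamma> * N \<gamma> / (100 * ln \<Delta>)"
        using False pv ln_pos by (simp add: le_divide_eq mult_left_mono)
      with False p_a_le[of p v \<gamma> \<Delta>] pv show ?thesis unfolding p_c_def N_def by simp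
    qed
  qed
  have "(\<Sum>\<gamma>\<in>L. p_a \<Delta> p v \<gamma> - p_c V E \<Delta> p v \<gamma>) \<le> (\<Sum>\<gamma>\<in>L. p v \<gamma> * N \<gamma>) / (100 * ln \<Delta>)"
    unfolding sum_divide_distrib by (rule sum_mono) (rule cut_le)
  also have "(\<Sum>\<gamma>\<in>L. p v \<gamma> * N \<gamma>) = xi V E L p v"
    unfolding xi_def N_def sum_distrib_left by (subst sum.swap) (simp add: mult.commute)
  finally show ?thesis .
qed

theorem mainTheorem8:
  fixes V :: "'a set" and E :: "'a \<Rightarrow> 'a \<Rightarrow> bool" and v :: 'a
    and L :: "'c set" and p :: "'a \<Rightarrow> 'c \<Rightarrow> real"
    and \<Delta> \<delta> \<nu> :: real
  assumes "\<Delta> > 1" and "\<delta> \<ge> 0" and "\<nu> \<ge> 0"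
    and "simple_graph V E" and "v \<in> V"
    and "finite L"
    and "\<forall>u\<in>V. \<forall>\<gamma>\<in>L. p u \<gamma> \<ge> 0"
    and "\<forall>\<gamma>\<in>L. p v \<gamma> = 0 \<or> p v \<gamma> \<ge> 1 / \<Delta>"
    and "entropy_h L p v \<ge> (1 - \<delta>) * ln \<Delta>"
    and "(\<Sum>\<gamma>\<in>L. p v \<gamma>) \<ge> 1 - \<nu>" and "(\<Sum>\<gamma>\<in>L. p v \<gamma>) \<le> 1 + \<nu>"
  shows "(\<Sum>\<gamma>\<in>L. p_a \<Delta> p v \<gamma>) \<ge> 1 - 6 * (\<delta> + \<nu>)
    \<and> (\<forall>K. 0 < K \<and> K \<le> ln \<Delta> \<and> xi V E L p v \<le> 2 * K \<longrightarrow>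
          (\<Sum>\<gamma>\<in>L. p_c V E \<Delta> p v \<gamma>) \<ge> 1 - 6 * (\<delta> + \<nu>) - 2 * eps)"
proof -
  have "(\<Sum>\<gamma>\<in>L. p_a \<Delta> p v \<gamma>) \<ge> 1 - 5 * \<delta> - 4 * \<nu>"
    using assms by (intro sum_p_a_ge) auto
  hence p_a_bound: "(\<Sum>\<gamma>\<in>L. p_a \<Delta> p v \<gamma>) \<ge> 1 - 6 * (\<delta> + \<nu>)"
    using assms(2,3) by (simp add: algebra_simps)
  have "(\<Sum>\<gamma>\<in>L. p_c V E \<Delta> p v \<gamma>) \<ge> 1 - 6 * (\<delta> + \<nu>) - 2 * eps"
    if K: "0 < K" "K \<le> ln \<Delta>" "xi V E L p v \<le> 2 * K" for K
  proof -
    have ln_pos: "0 < ln \<Delta>" using assms(1) by simp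
    have "(\<Sum>\<gamma>\<in>L. p_a \<Delta> p v \<gamma> - p_c V E \<Delta> p v \<gamma>) \<le> xi V E L p v / (100 * ln \<Delta>)"
      using assms(1,5,7) by (rule sum_p_a_minus_p_c_le_xi)
    also have "\<dots> \<le> 2 * ln \<Delta> / (100 * ln \<Delta>)"
      using K ln_pos by (intro divide_right_mono) auto
    also have "\<dots> = 2 * eps" using ln_pos unfolding eps_def by simp
    finally show ?thesis using p_a_bound by (simp add: sum_subtractf)
  qed
  with p_a_bound show ?thesis by blast
qed

end
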